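(* Let $h\in A_2(\mathbb R_+,\ell^1)$, and for $n\ge0$ put $Q_n=\langle h\rangle_{I_{n,2}}\langle h^{-1}\rangle_{I_{n,2}}-1$ and $f_n=\langle h\rangle_{I_{n,1}}$. Then, with absolute constants, (i) $C^{-1}(1+Q_n)^{-1}\le f_{n+1}/f_n\le C(1+Q_n)$ for all $n$; (ii) $|f_{n+1}/f_n-1|\le c\sqrt{Q_n}$ whenever $Q_n\le1$; (iii) for $\widetilde h(x)=h(x)/\langle h\rangle_{I_{n,1}}$, $x\in I_{n,1}$, $n\ge0$, one has $\|\widetilde h+\widetilde h^{-1}-2\|_{L^1(\mathbb R_+)}\le C[h]_{2,\ell^1}=C\sum_{n\ge0}Q_n$.
   Context: For a nonnegative $f$ and a set $E$ of positive measure, $\langle f\rangle_E=\frac1{|E|}\int_Ef\,dx$; $I_{x,y}=[x,x+y)$. For measurable $h\ge0$ on $\mathbb R_+=[0,\infty)$, $[h]_{2,\ell^1}=\sum_{n=0}^\infty\big(\langle h\rangle_{I_{n,2}}\langle h^{-1}\rangle_{I_{n,2}}-1\big)$, and $A_2(\mathbb R_+,\ell^1)$ is the class of $h\ge0$ with $[h]_{2,\ell^1}<\infty$. *)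

theory Defs
  imports "HOL-Analysis.Analysis"
begin

definition Ival :: "real \<Rightarrow> real \<Rightarrow> real set" where
  "Ival x y = {x..<x+y}"

definition avg :: "real set \<Rightarrow> (real \<Rightarrow> real) \<Rightarrow> real" where
  "avg E f = (LINT x:E|lborel. f x) / measure lborel E"

definition Qn :: "(real \<Rightarrow> real) \<Rightarrow> nat \<Rightarrow> real" where
  "Qn h n = avg (Ival (real n) 2) h * avg (Ival (real n) 2) (\<lambda>x. 1 / h x) - 1"

definition A2_char :: "(real \<Rightarrow> real) \<Rightarrow> real" where
  "A2_char h = (\<Sum>n. Qn h n)"

text \<open>Membership in A_2(R_+, l^1): h nonnegative measurable on R_+, the averages of h and
  h^{-1} over each I_{n,2} finite (h^{-1} meaningful: h > 0 a.e.), and the series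
  defining [h]_{2,l^1} convergent.\<close>
definition A2_l1 :: "(real \<Rightarrow> real) \<Rightarrow> bool" where
  "A2_l1 h \<longleftrightarrow>
     set_borel_measurable lborel {0..} h \<and>
     (\<forall>x\<ge>0. 0 \<le> h x) \<and>
     (AE x in lborel. 0 \<le> x \<longrightarrow> h x \<noteq> 0) \<and>
     (\<forall>n::nat. set_integrable lborel (Ival (real n) 2) h \<and>
                set_integrable lborel (Ival (real n) 2) (\<lambda>x. 1 / h x)) \<and>
     summable (Qn h)"

definition fn :: "(real \<Rightarrow> real) \<Rightarrow> nat \<Rightarrow> real" where
  "fn h n = avg (Ival (real n) 1) h"

definition htilde :: "(real \<Rightarrow> real) \<Rightarrow> real \<Rightarrow> real" where
  "htilde h x = h x / fn h (nat \<lfloor>x\<rfloor>)"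

end

theory Submission
  imports Defs
begin

text \<open>
  Let \<open>f n\<close> and \<open>g n\<close> be the averages of \<open>h\<close> and \<open>1/h\<close> over \<open>[n, n+1)\<close>. Splitting
  \<open>[n, n+2)\<close> into two unit intervals gives \<open>4 (1 + Q n) = (f n + f (n+1)) (g n + g (n+1))\<close>.
  The function \<open>h / f n + f n / h - 2\<close> is nonnegative and its integral over \<open>[n, n+1)\<close> is
  exactly \<open>f n * g n - 1\<close>; hence \<open>g n \<ge> 1 / f n\<close>, and inserting this into the product
  formula yields \<open>r + 1/r - 2 \<le> 4 Q n\<close> for \<open>r = f (n+1) / f n\<close> (whence (i) and (ii)) as
  well as \<open>f n * g n - 1 \<le> 4 Q n\<close>, which summed over \<open>n\<close> is (iii) with constant 4.
\<close>

lemma measure_pos_imp_finite_sets: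
  assumes "0 < measure M B"
  shows "B \<in> sets M" "emeasure M B \<noteq> \<infinity>"
proof -
  have "emeasure M B \<noteq> 0" "emeasure M B \<noteq> \<infinity>"
    using assms by (auto simp: measure_def)
  then show "B \<in> sets M" "emeasure M B \<noteq> \<infinity>"
    using emeasure_neq_0_sets by auto
qed

lemma avg_pos:
  assumes B: "0 < measure lborel B"
    and u: "set_integrable lborel B u"
    and pos: "AE x in lborel. x \<in> B \<longrightarrow> 0 < u x"
  shows "0 < avg B u"
proof -
  note B_sets = measure_pos_imp_finite_sets[OF B]
  have u': "integrable lborel (\<lambda>x. indicator B x * u x)"
    using u by (simp add: set_integrable_def)
  have nonneg: "AE x in lborel. 0 \<le> indicator B x * u x"
    using pos by eventually_elim (auto simp: indicator_def)
  have "(LINT x:B|lborel. u x) \<noteq> 0"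
  proof
    assume "(LINT x:B|lborel. u x) = 0"
    then have "AE x in lborel. indicator B x * u x = 0"
      using integral_nonneg_eq_0_iff_AE[OF u' nonneg]
      by (simp add: set_lebesgue_integral_def)
    with pos have "AE x in lborel. x \<notin> B"
      by eventually_elim (auto simp: indicator_def)
    then have "emeasure lborel B = 0"
      using AE_iff_null_sets[OF B_sets(1)] by blast
    with B show False by (simp add: measure_def)
  qed
  moreover have "0 \<le> (LINT x:B|lborel. u x)"
    using integral_nonneg_AE[OF nonneg] by (simp add: set_lebesgue_integral_def)
  ultimately show ?thesis
    using B by (simp add: avg_def)
qed

lemma add_divide_sym_ge_2:
  fixes a b :: real
  assumes "0 < a" "0 < b"
  shows "2 \<le> a / b + b / a"
proof -
  have "a / b + b / a - 2 = (a - b)\<^sup>2 / (a * b)"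
    using assms by (simp add: field_simps power2_eq_square)
  also have "\<dots> \<ge> 0"
    using assms by simp
  finally show ?thesis by simp
qed

text \<open>The integrand is nonnegative by AM-GM, so the identity for its integral contains
  Jensen's inequality \<open>\<langle>u\<rangle>\<^sub>B \<langle>u\<^sup>-\<^sup>1\<rangle>\<^sub>B \<ge> 1\<close>.\<close>
lemma avg_deviation:
  assumes B: "0 < measure lborel B"
    and u: "set_integrable lborel B u" "set_integrable lborel B (\<lambda>x. 1 / u x)"
    and pos: "AE x in lborel. x \<in> B \<longrightarrow> 0 < u x"
  defines "P \<equiv> avg B u"
  shows "(\<lambda>x. ennreal \<bar>u x / P + P / u x - 2\<bar> * indicator B x) \<in> borel_measurable lborel"
    and "(\<integral>\<^sup>+x\<in>B. ennreal \<bar>u x / P + P / u x - 2\<bar> \<partial>lborel)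
           = ennreal (measure lborel B * (P * avg B (\<lambda>x. 1 / u x) - 1))"
    and "1 \<le> P * avg B (\<lambda>x. 1 / u x)"
proof -
  define w where "w x = u x / P + P * (1 / u x) - 2" for x
  note B_sets = measure_pos_imp_finite_sets[OF B]
  have P: "0 < P"
    unfolding P_def using B u(1) pos by (rule avg_pos)
  have const: "set_integrable lborel B (\<lambda>_. c)" for c :: real
    using B_sets by (simp add: set_integrable_def less_top integrable_real_indicator)
  have iu: "set_integrable lborel B (\<lambda>x. u x / P)" and iv: "set_integrable lborel B (\<lambda>x. P * (1 / u x))"
    using u by (auto intro: set_integrable_mult_right simp del: times_divide_eq_right)
  have w_int: "set_integrable lborel B w"
    unfolding w_def using iu iv const by (intro set_integral_diff(1) set_integral_add(1))
  have int_u: "(LINT x:B|lborel. u x) = measure lborel B * P"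
    using B by (simp add: P_def avg_def)
  have int_v: "(LINT x:B|lborel. 1 / u x) = measure lborel B * avg B (\<lambda>x. 1 / u x)"
    using B by (simp add: avg_def)
  have "(LINT x:B|lborel. w x)
      = (LINT x:B|lborel. u x) / P + P * (LINT x:B|lborel. 1 / u x) - measure lborel B * 2"
    unfolding w_def set_integral_diff(2)[OF set_integral_add(1)[OF iu iv] const]
      set_integral_add(2)[OF iu iv]
    by (simp add: set_integral_const[OF B_sets] del: times_divide_eq_right)
  also have "\<dots> = measure lborel B * (P * avg B (\<lambda>x. 1 / u x) - 1)"
    unfolding int_u int_v using P by (simp add: algebra_simps)
  finally have "(LINT x:B|lborel. w x) = measure lborel B * (P * avg B (\<lambda>x. 1 / u x) - 1)" .
  moreover have w_nonneg: "AE x in lborel. 0 \<le> indicator B x * w x"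
    using pos
  proof eventually_elim
    case (elim x)
    then show ?case
      using add_divide_sym_ge_2[of "u x" P] P by (auto simp: w_def indicator_def)
  qed
  moreover have w_int': "integrable lborel (\<lambda>x. indicator B x * w x)"
    using w_int by (simp add: set_integrable_def)
  ultimately have eq: "(\<integral>\<^sup>+x. ennreal (indicator B x * w x) \<partial>lborel)
      = ennreal (measure lborel B * (P * avg B (\<lambda>x. 1 / u x) - 1))"
    and ge: "0 \<le> measure lborel B * (P * avg B (\<lambda>x. 1 / u x) - 1)"
    using nn_integral_eq_integral[OF w_int' w_nonneg] integral_nonneg_AE[OF w_nonneg]
    by (simp_all add: set_lebesgue_integral_def)
  have pointwise: "ennreal \<bar>u x / P + P / u x - 2\<bar> * indicator B x = ennreal \<bar>indicator B x * w x\<bar>" for x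
    by (simp add: w_def indicator_def)
  show "(\<lambda>x. ennreal \<bar>u x / P + P / u x - 2\<bar> * indicator B x) \<in> borel_measurable lborel"
    unfolding pointwise using borel_measurable_integrable[OF w_int'] by measurable
  have "(\<integral>\<^sup>+x\<in>B. ennreal \<bar>u x / P + P / u x - 2\<bar> \<partial>lborel)
      = (\<integral>\<^sup>+x. ennreal (indicator B x * w x) \<partial>lborel)"
    unfolding pointwise using w_nonneg by (intro nn_integral_cong_AE) auto
  with eq show "(\<integral>\<^sup>+x\<in>B. ennreal \<bar>u x / P + P / u x - 2\<bar> \<partial>lborel)
           = ennreal (measure lborel B * (P * avg B (\<lambda>x. 1 / u x) - 1))" by simp
  show "1 \<le> P * avg B (\<lambda>x. 1 / u x)"
    using ge B by (simp add: zero_le_mult_iff)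
qed

lemma mean_product_bounds:
  fixes f F g G :: real
  assumes f: "0 < f" "0 < F" and g: "1 \<le> f * g" "1 \<le> F * G"
  shows "F / f + f / F - 2 \<le> (f + F) * (g + G) - 4"
    and "f * g - 1 \<le> (f + F) * (g + G) - 4"
proof -
  have g': "1 / f \<le> g" "1 / F \<le> G"
    using f g by (simp_all add: field_simps)
  have "(f + F) * (1 / f + 1 / F) \<le> (f + F) * (g + G)"
    using f g' by (intro mult_left_mono) auto
  moreover have "(f + F) * (1 / f + 1 / F) = 2 + F / f + f / F"
    using f by (simp add: field_simps)
  ultimately show "F / f + f / F - 2 \<le> (f + F) * (g + G) - 4"
    by simp
  have "f / F \<le> f * G" "F / f \<le> F * g"
    using f g' mult_left_mono[of "1 / F" G f] mult_left_mono[of "1 / f" g F] by auto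
  then have "2 \<le> f * G + F * g"
    using add_divide_sym_ge_2[OF f] by linarith
  then show "f * g - 1 \<le> (f + F) * (g + G) - 4"
    using g by (simp add: algebra_simps)
qed

lemma ratio_bounds_of_add_inverse_le:
  fixes r q :: real
  assumes r: "0 < r" and q: "r + 1 / r - 2 \<le> q"
  shows "r \<le> 2 + q" "1 / (2 + q) \<le> r" "\<bar>r - 1\<bar> \<le> sqrt ((2 + q) * q)"
proof -
  have dev: "0 \<le> r + 1 / r - 2"
    using add_divide_sym_ge_2[OF r zero_less_one] by simp
  have "0 < 1 / r"
    using r by simp
  then show "r \<le> 2 + q"
    using q by linarith
  have "1 / r \<le> 2 + q"
    using r q by linarith
  moreover have "0 < 2 + q"
    using r \<open>r \<le> 2 + q\<close> by linarith
  ultimately show "1 / (2 + q) \<le> r"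
    using r by (simp add: field_simps)
  have "(r - 1)\<^sup>2 = r * (r + 1 / r - 2)"
    using r by (simp add: field_simps power2_eq_square)
  also have "\<dots> \<le> (2 + q) * q"
    using \<open>r \<le> 2 + q\<close> q dev r by (intro mult_mono) auto
  finally show "\<bar>r - 1\<bar> \<le> sqrt ((2 + q) * q)"
    using real_sqrt_le_mono by fastforce
qed

lemma measure_Ival: "0 \<le> y \<Longrightarrow> measure lborel (Ival x y) = y"
  by (simp add: Ival_def)

lemma Ival_unit_partition:
  "disjoint_family (\<lambda>n::nat. Ival (real n) 1)" "(\<Union>n::nat. Ival (real n) 1) = {0..}"
proof -
  have floor_Ival: "x \<in> Ival (real n) 1 \<longleftrightarrow> 0 \<le> x \<and> nat \<lfloor>x\<rfloor> = n" for x n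
    by (auto simp: Ival_def floor_eq_iff nat_eq_iff)
  show "disjoint_family (\<lambda>n::nat. Ival (real n) 1)"
    by (auto simp: disjoint_family_on_def floor_Ival)
  show "(\<Union>n::nat. Ival (real n) 1) = {0..}"
    by (auto simp: floor_Ival)
qed

lemma set_nn_integral_nonneg_reals_suminf:
  fixes F :: "real \<Rightarrow> ennreal"
  assumes "\<And>n::nat. (\<lambda>x. F x * indicator (Ival (real n) 1) x) \<in> borel_measurable lborel"
  shows "(\<integral>\<^sup>+x\<in>{0..}. F x \<partial>lborel) = (\<Sum>n. \<integral>\<^sup>+x\<in>Ival (real n) 1. F x \<partial>lborel)"
proof -
  have "F x * indicator {0..} x = (\<Sum>n. F x * indicator (Ival (real n) 1) x)" for x
    by (simp add: suminf_indicator Ival_unit_partition)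
  then have "(\<integral>\<^sup>+x\<in>{0..}. F x \<partial>lborel)
      = (\<integral>\<^sup>+x. (\<Sum>n. F x * indicator (Ival (real n) 1) x) \<partial>lborel)"
    by presburger
  also have "\<dots> = (\<Sum>n. \<integral>\<^sup>+x\<in>Ival (real n) 1. F x \<partial>lborel)"
    using assms by (rule nn_integral_suminf)
  finally show ?thesis .
qed

definition gn :: "(real \<Rightarrow> real) \<Rightarrow> nat \<Rightarrow> real" where
  "gn h n = avg (Ival (real n) 1) (\<lambda>x. 1 / h x)"

lemma avg_Ival_2:
  assumes "set_integrable lborel (Ival (real n) 2) g"
  shows "avg (Ival (real n) 2) g = (avg (Ival (real n) 1) g + avg (Ival (real (Suc n)) 1) g) / 2"
proof -
  have split: "Ival (real n) 2 = Ival (real n) 1 \<union> Ival (real (Suc n)) 1"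
    "Ival (real n) 1 \<inter> Ival (real (Suc n)) 1 = {}"
    by (auto simp: Ival_def)
  have "set_integrable lborel (Ival (real n) 1) g" "set_integrable lborel (Ival (real (Suc n)) 1) g"
    using assms by (auto intro: set_integrable_subset simp: split(1)[symmetric] Ival_def)
  then have "(LINT x:Ival (real n) 2|lborel. g x)
      = (LINT x:Ival (real n) 1|lborel. g x) + (LINT x:Ival (real (Suc n)) 1|lborel. g x)"
    unfolding split(1) by (rule set_integral_Un[OF split(2)])
  then show ?thesis
    unfolding avg_def by (simp add: measure_Ival)
qed

lemma A2_l1_set_integrable_Ival_1:
  assumes "A2_l1 h"
  shows "set_integrable lborel (Ival (real n) 1) h"
    and "set_integrable lborel (Ival (real n) 1) (\<lambda>x. 1 / h x)"
proof -
  have sub: "Ival (real n) 1 \<subseteq> Ival (real n) 2"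
    by (auto simp: Ival_def)
  have int2: "set_integrable lborel (Ival (real n) 2) h"
    "set_integrable lborel (Ival (real n) 2) (\<lambda>x. 1 / h x)"
    using assms by (auto simp: A2_l1_def)
  show "set_integrable lborel (Ival (real n) 1) h"
    by (rule set_integrable_subset[OF int2(1) _ sub]) (simp add: Ival_def)
  show "set_integrable lborel (Ival (real n) 1) (\<lambda>x. 1 / h x)"
    by (rule set_integrable_subset[OF int2(2) _ sub]) (simp add: Ival_def)
qed

lemma A2_l1_AE_pos_Ival:
  assumes "A2_l1 h"
  shows "AE x in lborel. x \<in> Ival (real n) 1 \<longrightarrow> 0 < h x"
proof -
  have ae: "AE x in lborel. 0 \<le> x \<longrightarrow> h x \<noteq> 0" and nonneg: "\<forall>x\<ge>0. 0 \<le> h x"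
    using assms by (simp_all add: A2_l1_def)
  show ?thesis
    using ae
  proof eventually_elim
    case (elim x)
    show ?case
    proof
      assume "x \<in> Ival (real n) 1"
      then have "0 \<le> x"
        by (simp add: Ival_def)
      with elim nonneg show "0 < h x"
        by (simp add: less_le)
    qed
  qed
qed

lemma htilde_Ival:
  assumes "x \<in> Ival (real n) 1"
  shows "htilde h x = h x / fn h n"
proof -
  have "\<lfloor>x\<rfloor> = int n"
    using assms by (simp add: Ival_def floor_eq_iff)
  then show ?thesis
    by (simp add: htilde_def)
qed

context
  fixes h :: "real \<Rightarrow> real"
  assumes h: "A2_l1 h"
begin

lemma fn_pos: "0 < fn h n"
  unfolding fn_def using measure_Ival[of 1] A2_l1_set_integrable_Ival_1(1)[OF h] A2_l1_AE_pos_Ival[OF h]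
  by (intro avg_pos) auto

lemma avg_deviation_Ival:
  "(\<lambda>x. ennreal \<bar>h x / fn h n + fn h n / h x - 2\<bar> * indicator (Ival (real n) 1) x)
     \<in> borel_measurable lborel"
  "(\<integral>\<^sup>+x\<in>Ival (real n) 1. ennreal \<bar>h x / fn h n + fn h n / h x - 2\<bar> \<partial>lborel)
     = ennreal (fn h n * gn h n - 1)"
  using avg_deviation[OF _ A2_l1_set_integrable_Ival_1[OF h] A2_l1_AE_pos_Ival[OF h]]
  by (simp_all add: measure_Ival fn_def gn_def)

lemma fn_mult_gn_ge_1: "1 \<le> fn h n * gn h n"
  using avg_deviation(3)[OF _ A2_l1_set_integrable_Ival_1[OF h] A2_l1_AE_pos_Ival[OF h]]
  by (simp add: measure_Ival fn_def gn_def)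

lemma set_nn_integral_htilde_Ival:
  "(\<integral>\<^sup>+x\<in>Ival (real n) 1. ennreal \<bar>htilde h x + 1 / htilde h x - 2\<bar> \<partial>lborel)
     = ennreal (fn h n * gn h n - 1)"
  and borel_measurable_htilde_Ival:
  "(\<lambda>x. ennreal \<bar>htilde h x + 1 / htilde h x - 2\<bar> * indicator (Ival (real n) 1) x)
     \<in> borel_measurable lborel"
proof -
  have eq: "ennreal \<bar>htilde h x + 1 / htilde h x - 2\<bar> * indicator (Ival (real n) 1) x
      = ennreal \<bar>h x / fn h n + fn h n / h x - 2\<bar> * indicator (Ival (real n) 1) x" for x
    by (cases "x \<in> Ival (real n) 1") (simp_all add: htilde_Ival)
  show "(\<integral>\<^sup>+x\<in>Ival (real n) 1. ennreal \<bar>htilde h x + 1 / htilde h x - 2\<bar> \<partial>lborel)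
     = ennreal (fn h n * gn h n - 1)"
    unfolding eq by (rule avg_deviation_Ival(2))
  show "(\<lambda>x. ennreal \<bar>htilde h x + 1 / htilde h x - 2\<bar> * indicator (Ival (real n) 1) x)
     \<in> borel_measurable lborel"
    unfolding eq by (rule avg_deviation_Ival(1))
qed

lemma Qn_eq_fn_gn: "Qn h n = (fn h n + fn h (Suc n)) * (gn h n + gn h (Suc n)) / 4 - 1"
  using h unfolding A2_l1_def Qn_def fn_def gn_def by (simp add: avg_Ival_2)

lemma Qn_bounds:
  "fn h (Suc n) / fn h n + fn h n / fn h (Suc n) - 2 \<le> 4 * Qn h n"
  "fn h n * gn h n - 1 \<le> 4 * Qn h n"
  using mean_product_bounds[of "fn h n" "fn h (Suc n)" "gn h n" "gn h (Suc n)",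
      OF fn_pos fn_pos fn_mult_gn_ge_1 fn_mult_gn_ge_1]
  by (simp_all add: Qn_eq_fn_gn)

lemma Qn_nonneg: "0 \<le> Qn h n"
  using Qn_bounds(1)[of n] add_divide_sym_ge_2[OF fn_pos fn_pos, of "Suc n" n] by linarith

lemma fn_ratio_bounds:
  shows "1 / 4 * (1 / (1 + Qn h n)) \<le> fn h (Suc n) / fn h n"
    and "fn h (Suc n) / fn h n \<le> 4 * (1 + Qn h n)"
    and "Qn h n \<le> 1 \<Longrightarrow> \<bar>fn h (Suc n) / fn h n - 1\<bar> \<le> 5 * sqrt (Qn h n)"
proof -
  define r Q where "r = fn h (Suc n) / fn h n" and "Q = Qn h n"
  have r: "0 < r"
    unfolding r_def using fn_pos fn_pos by simp
  have Q: "0 \<le> Q"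
    unfolding Q_def by (rule Qn_nonneg)
  have "r + 1 / r - 2 \<le> 4 * Q"
    using Qn_bounds(1)[of n] by (simp add: r_def Q_def)
  note bounds = ratio_bounds_of_add_inverse_le[OF r this]
  have "1 / 4 * (1 / (1 + Q)) \<le> 1 / (2 + 4 * Q)"
    using Q by (simp add: frac_le)
  with bounds(2) show "1 / 4 * (1 / (1 + Qn h n)) \<le> fn h (Suc n) / fn h n"
    unfolding r_def Q_def by linarith
  have "2 + 4 * Q \<le> 4 * (1 + Q)"
    by simp
  with bounds(1) show "fn h (Suc n) / fn h n \<le> 4 * (1 + Qn h n)"
    unfolding r_def Q_def by linarith
  assume "Qn h n \<le> 1"
  then have "Q * Q \<le> Q"
    using Q mult_left_mono[of Q 1 Q] unfolding Q_def by simp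
  moreover have "(2 + 4 * Q) * (4 * Q) = 8 * Q + 16 * (Q * Q)"
    by (simp add: algebra_simps)
  ultimately have "(2 + 4 * Q) * (4 * Q) \<le> 25 * Q"
    using Q by linarith
  then have "sqrt ((2 + 4 * Q) * (4 * Q)) \<le> sqrt (5\<^sup>2 * Q)"
    by (intro real_sqrt_le_mono) simp
  also have "\<dots> = 5 * sqrt Q"
    by (simp add: real_sqrt_mult)
  finally have "sqrt ((2 + 4 * Q) * (4 * Q)) \<le> 5 * sqrt Q" .
  with bounds(3) show "\<bar>fn h (Suc n) / fn h n - 1\<bar> \<le> 5 * sqrt (Qn h n)"
    unfolding r_def Q_def by linarith
qed

lemma set_nn_integral_htilde_le_A2_char:
  "(\<integral>\<^sup>+x\<in>{0..}. ennreal \<bar>htilde h x + 1 / htilde h x - 2\<bar> \<partial>lborel)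
     \<le> ennreal (4 * A2_char h)"
proof -
  have summable: "summable (Qn h)"
    using h by (simp add: A2_l1_def)
  have "(\<integral>\<^sup>+x\<in>{0..}. ennreal \<bar>htilde h x + 1 / htilde h x - 2\<bar> \<partial>lborel)
      = (\<Sum>n. ennreal (fn h n * gn h n - 1))"
    unfolding set_nn_integral_nonneg_reals_suminf[OF borel_measurable_htilde_Ival]
    by (simp only: set_nn_integral_htilde_Ival)
  also have "\<dots> \<le> (\<Sum>n. ennreal (4 * Qn h n))"
    using Qn_bounds(2) by (intro suminf_le ennreal_leI) auto
  also have "\<dots> = ennreal (\<Sum>n. 4 * Qn h n)"
    using summable Qn_nonneg by (intro suminf_ennreal2) (auto intro: summable_mult)
  also have "\<dots> = ennreal (4 * A2_char h)"
    using summable by (simp add: A2_char_def suminf_mult)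
  finally show ?thesis .
qed

end

theorem lemma5p2:
  shows "\<exists>C c :: real. C > 0 \<and> c > 0 \<and>
    (\<forall>h. A2_l1 h \<longrightarrow>
      (\<forall>n. (1 / C) * (1 / (1 + Qn h n)) \<le> fn h (Suc n) / fn h n \<and>
           fn h (Suc n) / fn h n \<le> C * (1 + Qn h n)) \<and>
      (\<forall>n. Qn h n \<le> 1 \<longrightarrow> \<bar>fn h (Suc n) / fn h n - 1\<bar> \<le> c * sqrt (Qn h n)) \<and>
      (\<integral>\<^sup>+ x \<in> {0..}. ennreal \<bar>htilde h x + 1 / htilde h x - 2\<bar> \<partial>lborel)
         \<le> ennreal (C * A2_char h))"
  using fn_ratio_bounds set_nn_integral_htilde_le_A2_char
  by (intro exI[of _ 4] exI[of _ 5]) auto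

end
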